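(* Let $T=(p,q:F\to E)$ be a textile system with $p$ and $q$ surjective. Let $G_T$ be the associated 2-colored graph and $\sim$ the associated equivalence relation on its path category $G_T^*$. Then the quotient category $\Lambda_T=G_T^*/\sim$, with degree induced by the colors, is a 2-graph if and only if $T$ is LR.
   Context: Directed graph $E=(E^0,E^1,r,s)$. Textile system $T=(p,q:F\to E)$: graph homomorphisms $p,q$ (maps on vertices and edges commuting with $r,s$) with $f\mapsto(r(f),p(f),s(f),q(f))$ injective on $F^1$. LR: $p$ has unique $r$-path lifting (for $v\in F^0,e\in E^1$ with $p(v)=r(e)$, exactly one $f\in F^1$ with $r(f)=v,p(f)=e$) and $q$ has unique $s$-path lifting (same with $s$). A 2-graph is a countable category $\Lambda$ with a functor $d:\Lambda\to\mathbb N^2$ such that if $d(\lambda)=m+n$ there are unique $\mu,\nu$ with $d(\mu)=m,d(\nu)=n,\lambda=\mu\nu$ (composition $\mu\nu$ when $s(\mu)=r(\nu)$). The 2-colored graph $G_T$: vertices $E^0$; edges $E^1\sqcup F^0$; edges $e\in E^1$ have color $\varepsilon_1$ and range, source from $E$; edges $w\in F^0$ have color $\varepsilon_2$, $s(w)=p(w)$, $r(w)=q(w)$. Paths are composed right to left ($\alpha\beta$ is a path when $s(\alpha)=r(\beta)$), and the degree of a path counts edges of each color. The relation $\sim$: each vertex and edge is equivalent only to itself; on two-edge two-colored paths, $ve\sim e'w$ iff there is $f\in F^1$ with $r(f)=v$, $s(f)=w$, $p(f)=e$, $q(f)=e'$; $\sim$ is extended to all paths as the equivalence relation generated by these relations and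 compatible with concatenation ($[\lambda\mu]=[\lambda][\mu]$). *)

theory Defs
  imports Main "HOL-Library.Countable_Set" "HOL-Library.Product_Plus"
begin

definition dgraph :: "'v set \<Rightarrow> 'e set \<Rightarrow> ('e \<Rightarrow> 'v) \<Rightarrow> ('e \<Rightarrow> 'v) \<Rightarrow> bool" where
  "dgraph V Ed r s \<longleftrightarrow> (\<forall>e\<in>Ed. r e \<in> V \<and> s e \<in> V)"

definition graph_hom ::
  "'w set \<Rightarrow> 'f set \<Rightarrow> ('f \<Rightarrow> 'w) \<Rightarrow> ('f \<Rightarrow> 'w) \<Rightarrow>
   'v set \<Rightarrow> 'e set \<Rightarrow> ('e \<Rightarrow> 'v) \<Rightarrow> ('e \<Rightarrow> 'v) \<Rightarrow>
   ('w \<Rightarrow> 'v) \<Rightarrow> ('f \<Rightarrow> 'e) \<Rightarrow> bool" where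
  "graph_hom F0 F1 rF sF E0 E1 rE sE h0 h1 \<longleftrightarrow>
     (\<forall>w\<in>F0. h0 w \<in> E0) \<and> (\<forall>f\<in>F1. h1 f \<in> E1) \<and>
     (\<forall>f\<in>F1. rE (h1 f) = h0 (rF f) \<and> sE (h1 f) = h0 (sF f))"

definition textile_system ::
  "'v set \<Rightarrow> 'e set \<Rightarrow> ('e \<Rightarrow> 'v) \<Rightarrow> ('e \<Rightarrow> 'v) \<Rightarrow>
   'w set \<Rightarrow> 'f set \<Rightarrow> ('f \<Rightarrow> 'w) \<Rightarrow> ('f \<Rightarrow> 'w) \<Rightarrow>
   ('w \<Rightarrow> 'v) \<Rightarrow> ('f \<Rightarrow> 'e) \<Rightarrow> ('w \<Rightarrow> 'v) \<Rightarrow> ('f \<Rightarrow> 'e) \<Rightarrow> bool" where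
  "textile_system E0 E1 rE sE F0 F1 rF sF p0 p1 q0 q1 \<longleftrightarrow>
     dgraph E0 E1 rE sE \<and> dgraph F0 F1 rF sF \<and>
     graph_hom F0 F1 rF sF E0 E1 rE sE p0 p1 \<and>
     graph_hom F0 F1 rF sF E0 E1 rE sE q0 q1 \<and>
     inj_on (\<lambda>f. (rF f, p1 f, sF f, q1 f)) F1"

definition hom_surjective :: "'w set \<Rightarrow> 'f set \<Rightarrow> 'v set \<Rightarrow> 'e set \<Rightarrow>
   ('w \<Rightarrow> 'v) \<Rightarrow> ('f \<Rightarrow> 'e) \<Rightarrow> bool" where
  "hom_surjective F0 F1 E0 E1 h0 h1 \<longleftrightarrow> h0 ` F0 = E0 \<and> h1 ` F1 = E1"

definition textile_LR ::
  "'v set \<Rightarrow> 'e set \<Rightarrow> ('e \<Rightarrow> 'v) \<Rightarrow> ('e \<Rightarrow> 'v) \<Rightarrow>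
   'w set \<Rightarrow> 'f set \<Rightarrow> ('f \<Rightarrow> 'w) \<Rightarrow> ('f \<Rightarrow> 'w) \<Rightarrow>
   ('w \<Rightarrow> 'v) \<Rightarrow> ('f \<Rightarrow> 'e) \<Rightarrow> ('w \<Rightarrow> 'v) \<Rightarrow> ('f \<Rightarrow> 'e) \<Rightarrow> bool" where
  "textile_LR E0 E1 rE sE F0 F1 rF sF p0 p1 q0 q1 \<longleftrightarrow>
     (\<forall>v\<in>F0. \<forall>e\<in>E1. p0 v = rE e \<longrightarrow> (\<exists>!f. f \<in> F1 \<and> rF f = v \<and> p1 f = e)) \<and>
     (\<forall>v\<in>F0. \<forall>e\<in>E1. q0 v = sE e \<longrightarrow> (\<exists>!f. f \<in> F1 \<and> sF f = v \<and> q1 f = e))"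

text \<open>A (small) category with object set Ob, morphism set Mor, range (codomain) cd,
  source (domain) dm, identities idm and composition cmp (cmp f g defined when
  dm f = cd g, i.e. f after g).\<close>
definition category :: "'o set \<Rightarrow> 'm set \<Rightarrow> ('m \<Rightarrow> 'o) \<Rightarrow> ('m \<Rightarrow> 'o) \<Rightarrow>
    ('o \<Rightarrow> 'm) \<Rightarrow> ('m \<Rightarrow> 'm \<Rightarrow> 'm) \<Rightarrow> bool" where
  "category Ob Mor cd dm idm cmp \<longleftrightarrow>
     (\<forall>f\<in>Mor. cd f \<in> Ob \<and> dm f \<in> Ob) \<and>
     (\<forall>x\<in>Ob. idm x \<in> Mor \<and> cd (idm x) = x \<and> dm (idm x) = x) \<and>
     (\<forall>f\<in>Mor. \<forall>g\<in>Mor. dm f = cd g \<longrightarrow>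
        cmp f g \<in> Mor \<and> cd (cmp f g) = cd f \<and> dm (cmp f g) = dm g) \<and>
     (\<forall>f\<in>Mor. \<forall>g\<in>Mor. \<forall>h\<in>Mor. dm f = cd g \<longrightarrow> dm g = cd h \<longrightarrow>
        cmp (cmp f g) h = cmp f (cmp g h)) \<and>
     (\<forall>f\<in>Mor. cmp (idm (cd f)) f = f \<and> cmp f (idm (dm f)) = f)"

definition two_graph :: "'o set \<Rightarrow> 'm set \<Rightarrow> ('m \<Rightarrow> 'o) \<Rightarrow> ('m \<Rightarrow> 'o) \<Rightarrow>
    ('o \<Rightarrow> 'm) \<Rightarrow> ('m \<Rightarrow> 'm \<Rightarrow> 'm) \<Rightarrow> ('m \<Rightarrow> nat \<times> nat) \<Rightarrow> bool" where
  "two_graph Ob Mor cd dm idm cmp d \<longleftrightarrow>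
     category Ob Mor cd dm idm cmp \<and> countable Mor \<and>
     (\<forall>x\<in>Ob. d (idm x) = 0) \<and>
     (\<forall>f\<in>Mor. \<forall>g\<in>Mor. dm f = cd g \<longrightarrow> d (cmp f g) = d f + d g) \<and>
     (\<forall>l\<in>Mor. \<forall>m n. d l = m + n \<longrightarrow>
        (\<exists>!(\<mu>, \<nu>). \<mu> \<in> Mor \<and> \<nu> \<in> Mor \<and> dm \<mu> = cd \<nu> \<and>
            d \<mu> = m \<and> d \<nu> = n \<and> l = cmp \<mu> \<nu>))"

text \<open>Edges of G_T: Inl e for e in E1 (colour 1), Inr w for w in F0 (colour 2).\<close>
definition GT_edges :: "'e set \<Rightarrow> 'w set \<Rightarrow> ('e + 'w) set" where
  "GT_edges E1 F0 = E1 <+> F0"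

fun GT_r :: "('e \<Rightarrow> 'v) \<Rightarrow> ('w \<Rightarrow> 'v) \<Rightarrow> ('e + 'w) \<Rightarrow> 'v" where
  "GT_r rE q0 (Inl e) = rE e"
| "GT_r rE q0 (Inr w) = q0 w"

fun GT_s :: "('e \<Rightarrow> 'v) \<Rightarrow> ('w \<Rightarrow> 'v) \<Rightarrow> ('e + 'w) \<Rightarrow> 'v" where
  "GT_s sE p0 (Inl e) = sE e"
| "GT_s sE p0 (Inr w) = p0 w"

text \<open>A path in G_T is a pair (v, es): v is its range vertex and es the list of edges,
  written left (range side) to right (source side); (v, []) is the vertex v.\<close>
definition GT_paths :: "'v set \<Rightarrow> 'e set \<Rightarrow> ('e \<Rightarrow> 'v) \<Rightarrow> ('e \<Rightarrow> 'v) \<Rightarrow>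
    'w set \<Rightarrow> ('w \<Rightarrow> 'v) \<Rightarrow> ('w \<Rightarrow> 'v) \<Rightarrow> ('v \<times> ('e + 'w) list) set" where
  "GT_paths E0 E1 rE sE F0 p0 q0 =
     {(v, es). v \<in> E0 \<and> set es \<subseteq> GT_edges E1 F0 \<and>
        (es \<noteq> [] \<longrightarrow> GT_r rE q0 (hd es) = v) \<and>
        (\<forall>i. Suc i < length es \<longrightarrow> GT_s sE p0 (es ! i) = GT_r rE q0 (es ! Suc i))}"

definition path_range :: "('v \<times> ('e + 'w) list) \<Rightarrow> 'v" where
  "path_range x = fst x"

definition path_source :: "('e \<Rightarrow> 'v) \<Rightarrow> ('w \<Rightarrow> 'v) \<Rightarrow> ('v \<times> ('e + 'w) list) \<Rightarrow> 'v" where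
  "path_source sE p0 x = (if snd x = [] then fst x else GT_s sE p0 (last (snd x)))"

definition path_concat :: "('v \<times> ('e + 'w) list) \<Rightarrow> ('v \<times> ('e + 'w) list) \<Rightarrow> ('v \<times> ('e + 'w) list)" where
  "path_concat x y = (fst x, snd x @ snd y)"

definition path_degree :: "('v \<times> ('e + 'w) list) \<Rightarrow> nat \<times> nat" where
  "path_degree x = (length (filter isl (snd x)), length (filter (\<lambda>a. \<not> isl a) (snd x)))"

definition GT_step :: "'v set \<Rightarrow> 'e set \<Rightarrow> ('e \<Rightarrow> 'v) \<Rightarrow> ('e \<Rightarrow> 'v) \<Rightarrow>
    'w set \<Rightarrow> 'f set \<Rightarrow> ('f \<Rightarrow> 'w) \<Rightarrow> ('f \<Rightarrow> 'w) \<Rightarrow>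
    ('w \<Rightarrow> 'v) \<Rightarrow> ('f \<Rightarrow> 'e) \<Rightarrow> ('w \<Rightarrow> 'v) \<Rightarrow> ('f \<Rightarrow> 'e) \<Rightarrow>
    (('v \<times> ('e + 'w) list) \<times> ('v \<times> ('e + 'w) list)) set" where
  "GT_step E0 E1 rE sE F0 F1 rF sF p0 p1 q0 q1 =
     {((u, xs @ [Inr v, Inl e] @ ys), (u, xs @ [Inl e', Inr w] @ ys)) | u xs ys v e e' w.
        (u, xs @ [Inr v, Inl e] @ ys) \<in> GT_paths E0 E1 rE sE F0 p0 q0 \<and>
        (u, xs @ [Inl e', Inr w] @ ys) \<in> GT_paths E0 E1 rE sE F0 p0 q0 \<and>
        (\<exists>f\<in>F1. rF f = v \<and> sF f = w \<and> p1 f = e \<and> q1 f = e')}"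

definition GT_sim where
  "GT_sim E0 E1 rE sE F0 F1 rF sF p0 p1 q0 q1 =
     (let R = GT_step E0 E1 rE sE F0 F1 rF sF p0 p1 q0 q1 in (R \<union> R\<inverse>)\<^sup>*)"

definition rep :: "'a set \<Rightarrow> 'a" where "rep C = (SOME x. x \<in> C)"

definition LamT_mor where
  "LamT_mor E0 E1 rE sE F0 F1 rF sF p0 p1 q0 q1 =
     GT_paths E0 E1 rE sE F0 p0 q0 // GT_sim E0 E1 rE sE F0 F1 rF sF p0 p1 q0 q1"

definition LamT_cod :: "('v \<times> ('e + 'w) list) set \<Rightarrow> 'v" where
  "LamT_cod C = path_range (rep C)"

definition LamT_dom :: "('e \<Rightarrow> 'v) \<Rightarrow> ('w \<Rightarrow> 'v) \<Rightarrow> ('v \<times> ('e + 'w) list) set \<Rightarrow> 'v" where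
  "LamT_dom sE p0 C = path_source sE p0 (rep C)"

definition LamT_id where
  "LamT_id E0 E1 rE sE F0 F1 rF sF p0 p1 q0 q1 v =
     GT_sim E0 E1 rE sE F0 F1 rF sF p0 p1 q0 q1 `` {(v, [])}"

definition LamT_comp where
  "LamT_comp E0 E1 rE sE F0 F1 rF sF p0 p1 q0 q1 A B =
     GT_sim E0 E1 rE sE F0 F1 rF sF p0 p1 q0 q1 `` {path_concat (rep A) (rep B)}"

definition LamT_deg :: "('v \<times> ('e + 'w) list) set \<Rightarrow> nat \<times> nat" where
  "LamT_deg C = path_degree (rep C)"

end

theory Submission
  imports Defs "HOL-Library.Multiset"
begin

(* The generators of ~ swap a two-edge path w e (colour 2, then colour 1) with e' w', one swap
   for every f in F^1 with r f = w, p f = e, q f = e', s f = w'.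

   If Lambda_T is a 2-graph, the swaps of a two-edge path correspond to the factorisations of
   its class in the opposite colour order, so there is exactly one; as the map
   f -> (r f, p f, s f, q f) is injective, every path w e is (r f, p f) and every path e' w'
   is (q f, s f) for exactly one f, which is the LR condition.

   Conversely, under LR every path is equivalent to exactly one path with any prescribed
   colour sequence of the right degree. Such a path exists because adjacent edges of different
   colours can always be swapped; it is unique because pushing every colour-2 edge past the
   colour-1 edges to its right yields a normal form that is invariant under ~ and injective on
   paths with equal colour sequences. A factorisation of a morphism of degree m + n is then
   the splitting of its unique representative whose colour sequence lists first the m and then
   the n edges, each block with colour 1 before colour 2. *)

lemma rtrancl_sym_invariant:
  assumes "\<And>a b. (a, b) \<in> R \<Longrightarrow> g a = g b" and "(x, y) \<in> (R \<union> R\<inverse>)\<^sup>*"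
  shows "g x = g y"
  using assms(2) by induction (auto dest: assms(1))

(* Colour sequences are lists of isl-values: True stands for colour 1. *)
definition colour_pattern :: "nat \<times> nat \<Rightarrow> bool list" where
  "colour_pattern d = replicate (fst d) True @ replicate (snd d) False"

lemma mset_colour_pattern_add:
  "mset (colour_pattern (m + n)) = mset (colour_pattern m @ colour_pattern n)"
  by (simp add: colour_pattern_def replicate_add)

lemma mset_map_isl: "mset (map isl L) = mset (colour_pattern (path_degree (u, L)))"
  by (induction L) (auto simp: path_degree_def colour_pattern_def)

lemma colours_single_edge:
  "path_degree x = path_degree (u, [a]) \<Longrightarrow> \<exists>a'. snd x = [a'] \<and> isl a' = isl a"
  using mset_map_isl[of "snd x" "fst x"] mset_map_isl[of "[a]" u]
  by (simp del: mset_map add: map_eq_Cons_conv)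

lemma path_degree_eq_if_colours:
  assumes "map isl (snd x) = colour_pattern d"
  shows "path_degree x = d"
proof -
  have "length (filter isl (snd x)) = length (filter id (map isl (snd x)))"
    and "length (filter (\<lambda>a. \<not> isl a) (snd x)) = length (filter Not (map isl (snd x)))"
    by (simp_all add: filter_map comp_def)
  then show ?thesis
    using assms by (simp add: path_degree_def colour_pattern_def prod_eq_iff filter_replicate)
qed

lemma ex1_case_prodD:
  "\<exists>!(a, b). P a b \<Longrightarrow> P a1 b1 \<Longrightarrow> P a2 b2 \<Longrightarrow> a1 = a2 \<and> b1 = b2"
  unfolding Ex1_def by auto

lemma ex1_case_prodI:
  assumes "P a b" and "\<And>c d. P c d \<Longrightarrow> c = a \<and> d = b"
  shows "\<exists>!(x, y). P x y"
proof (rule ex1I[of _ "(a, b)"])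
  show "case (a, b) of (x, y) \<Rightarrow> P x y" using assms(1) by simp
next
  fix z assume "case z of (x, y) \<Rightarrow> P x y"
  then show "z = (a, b)" using assms(2) by (cases z) simp
qed

lemma path_degree_concat: "path_degree (path_concat x y) = path_degree x + path_degree y"
  by (simp add: path_degree_def path_concat_def)

lemma two_elem_eq_append_conv: "[a, b] = xs @ c # d # ys \<longleftrightarrow> xs = [] \<and> ys = [] \<and> a = c \<and> b = d"
  by (cases xs) (auto simp: Cons_eq_append_conv)

locale textile =
  fixes E0 :: "'v set" and E1 :: "'e set" and rE sE :: "'e \<Rightarrow> 'v"
    and F0 :: "'w set" and F1 :: "'f set" and rF sF :: "'f \<Rightarrow> 'w"
    and p0 :: "'w \<Rightarrow> 'v" and p1 :: "'f \<Rightarrow> 'e" and q0 :: "'w \<Rightarrow> 'v" and q1 :: "'f \<Rightarrow> 'e"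
  assumes textile_system: "textile_system E0 E1 rE sE F0 F1 rF sF p0 p1 q0 q1"
begin

lemma rE_in_E0: "e \<in> E1 \<Longrightarrow> rE e \<in> E0" and sE_in_E0: "e \<in> E1 \<Longrightarrow> sE e \<in> E0"
  and rF_in_F0: "f \<in> F1 \<Longrightarrow> rF f \<in> F0" and sF_in_F0: "f \<in> F1 \<Longrightarrow> sF f \<in> F0"
  and p0_in_E0: "w \<in> F0 \<Longrightarrow> p0 w \<in> E0" and q0_in_E0: "w \<in> F0 \<Longrightarrow> q0 w \<in> E0"
  and p1_in_E1: "f \<in> F1 \<Longrightarrow> p1 f \<in> E1" and q1_in_E1: "f \<in> F1 \<Longrightarrow> q1 f \<in> E1"
  and rE_p1: "f \<in> F1 \<Longrightarrow> rE (p1 f) = p0 (rF f)" and sE_p1: "f \<in> F1 \<Longrightarrow> sE (p1 f) = p0 (sF f)"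
  and rE_q1: "f \<in> F1 \<Longrightarrow> rE (q1 f) = q0 (rF f)" and sE_q1: "f \<in> F1 \<Longrightarrow> sE (q1 f) = q0 (sF f)"
  and square_inj: "inj_on (\<lambda>f. (rF f, p1 f, sF f, q1 f)) F1"
  using textile_system unfolding textile_system_def dgraph_def graph_hom_def by auto

abbreviation "edges \<equiv> GT_edges E1 F0"
abbreviation "edge_r \<equiv> GT_r rE q0"
abbreviation "edge_s \<equiv> GT_s sE p0"
abbreviation "paths \<equiv> GT_paths E0 E1 rE sE F0 p0 q0"
abbreviation "step \<equiv> GT_step E0 E1 rE sE F0 F1 rF sF p0 p1 q0 q1"
abbreviation "sim \<equiv> GT_sim E0 E1 rE sE F0 F1 rF sF p0 p1 q0 q1"

lemma sim_eq: "sim = (step \<union> step\<inverse>)\<^sup>*"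
  by (simp add: GT_sim_def Let_def)

lemma edge_s_in_E0: "x \<in> edges \<Longrightarrow> edge_s x \<in> E0"
  by (cases x) (auto simp: GT_edges_def sE_in_E0 p0_in_E0)

fun walk :: "'v \<Rightarrow> ('e + 'w) list \<Rightarrow> bool" where
  "walk u [] \<longleftrightarrow> True"
| "walk u (x # L) \<longleftrightarrow> x \<in> edges \<and> edge_r x = u \<and> walk (edge_s x) L"

fun walk_source :: "'v \<Rightarrow> ('e + 'w) list \<Rightarrow> 'v" where
  "walk_source u [] = u"
| "walk_source u (x # L) = walk_source (edge_s x) L"

abbreviation src :: "'v \<times> ('e + 'w) list \<Rightarrow> 'v" where
  "src x \<equiv> walk_source (fst x) (snd x)"

lemma walk_source_append [simp]: "walk_source u (L @ M) = walk_source (walk_source u L) M"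
  by (induction L arbitrary: u) auto

lemma walk_append: "walk u (L @ M) \<longleftrightarrow> walk u L \<and> walk (walk_source u L) M"
  by (induction L arbitrary: u) auto

lemma walk_source_in_E0: "u \<in> E0 \<Longrightarrow> walk u L \<Longrightarrow> walk_source u L \<in> E0"
  by (induction L arbitrary: u) (auto simp: edge_s_in_E0)

lemma path_source_eq: "path_source sE p0 x = src x"
proof -
  have "path_source sE p0 (u, L) = walk_source u L" for u L
    by (induction L arbitrary: u) (auto simp: path_source_def)
  then show ?thesis by (metis prod.collapse)
qed

lemma paths_Cons:
  "(u, x # L) \<in> paths \<longleftrightarrow> u \<in> E0 \<and> x \<in> edges \<and> edge_r x = u \<and> (edge_s x, L) \<in> paths"
proof -
  have all_nat: "(\<forall>i. P i) \<longleftrightarrow> P 0 \<and> (\<forall>i. P (Suc i))" for P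
    by (metis not0_implies_Suc)
  have "(\<forall>i. Suc i < length (x # L) \<longrightarrow> edge_s ((x # L) ! i) = edge_r ((x # L) ! Suc i)) \<longleftrightarrow>
      (L \<noteq> [] \<longrightarrow> edge_s x = edge_r (hd L)) \<and>
      (\<forall>i. Suc i < length L \<longrightarrow> edge_s (L ! i) = edge_r (L ! Suc i))"
    by (subst all_nat) (auto simp: hd_conv_nth)
  then show ?thesis using edge_s_in_E0 by (auto simp: GT_paths_def)
qed

lemma paths_Nil: "(u, []) \<in> paths \<longleftrightarrow> u \<in> E0"
  by (simp add: GT_paths_def)

lemma paths_iff_walk: "(u, L) \<in> paths \<longleftrightarrow> u \<in> E0 \<and> walk u L"
  by (induction L arbitrary: u) (auto simp: paths_Nil paths_Cons edge_s_in_E0)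

lemma mem_paths_iff: "x \<in> paths \<longleftrightarrow> fst x \<in> E0 \<and> walk (fst x) (snd x)"
  using paths_iff_walk[of "fst x" "snd x"] by simp

lemma walk_square:
  assumes "f \<in> F1"
  shows "walk z [Inr (rF f), Inl (p1 f)] \<longleftrightarrow> z = q0 (rF f)"
    and "walk z [Inl (q1 f), Inr (sF f)] \<longleftrightarrow> z = q0 (rF f)"
    and "walk_source z [Inr (rF f), Inl (p1 f)] = p0 (sF f)"
    and "walk_source z [Inl (q1 f), Inr (sF f)] = p0 (sF f)"
  using assms
  by (auto simp: GT_edges_def rF_in_F0 sF_in_F0 p1_in_E1 q1_in_E1 rE_p1 sE_p1 rE_q1 sE_q1)

lemma paths_swap_iff: "f \<in> F1 \<Longrightarrow>
  (u, xs @ [Inr (rF f), Inl (p1 f)] @ ys) \<in> paths \<longleftrightarrow> (u, xs @ [Inl (q1 f), Inr (sF f)] @ ys) \<in> paths"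
  by (simp only: paths_iff_walk walk_append walk_source_append walk_square)

lemma step_iff: "(a, b) \<in> step \<longleftrightarrow> a \<in> paths \<and> (\<exists>u xs ys f. f \<in> F1 \<and>
   a = (u, xs @ [Inr (rF f), Inl (p1 f)] @ ys) \<and> b = (u, xs @ [Inl (q1 f), Inr (sF f)] @ ys))"
  unfolding GT_step_def using paths_swap_iff by auto blast+

lemma square_step: "f \<in> F1 \<Longrightarrow> (u, xs @ [Inr (rF f), Inl (p1 f)] @ ys) \<in> paths \<Longrightarrow>
  ((u, xs @ [Inr (rF f), Inl (p1 f)] @ ys), (u, xs @ [Inl (q1 f), Inr (sF f)] @ ys)) \<in> step"
  unfolding step_iff by blast

lemma step_paths: "(a, b) \<in> step \<Longrightarrow> a \<in> paths \<and> b \<in> paths"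
  unfolding GT_step_def by auto

lemma step_invariants:
  assumes "(a, b) \<in> step"
  shows "fst a = fst b" "src a = src b" "path_degree a = path_degree b"
  using assms unfolding step_iff by (auto simp: walk_square path_degree_def sE_p1)

lemma sim_refl: "(x, x) \<in> sim"
  unfolding sim_eq by simp

lemma sim_sym: "(x, y) \<in> sim \<Longrightarrow> (y, x) \<in> sim"
  unfolding sim_eq by (metis sym_Un_converse sym_rtrancl symD)

lemma sim_trans: "(x, y) \<in> sim \<Longrightarrow> (y, z) \<in> sim \<Longrightarrow> (x, z) \<in> sim"
  unfolding sim_eq by (rule rtrancl_trans)

lemma step_sim: "(x, y) \<in> step \<Longrightarrow> (x, y) \<in> sim"
  unfolding sim_eq by auto

lemma sim_invariants:
  assumes "(x, y) \<in> sim"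
  shows "fst x = fst y" "src x = src y" "path_degree x = path_degree y"
    and "x \<in> paths \<longleftrightarrow> y \<in> paths"
proof -
  note invariant = rtrancl_sym_invariant[OF _ assms[unfolded sim_eq]]
  show "fst x = fst y" by (rule invariant[of fst]) (rule step_invariants)
  show "src x = src y" by (rule invariant[of src]) (rule step_invariants)
  show "path_degree x = path_degree y"
    by (rule invariant[of path_degree]) (rule step_invariants)
  show "x \<in> paths \<longleftrightarrow> y \<in> paths"
    by (rule invariant[of "\<lambda>x. x \<in> paths"]) (simp add: step_paths)
qed

lemma sim_short: "(x, y) \<in> sim \<Longrightarrow> length (snd x) < 2 \<Longrightarrow> y = x"
  unfolding sim_eq by (erule converse_rtranclE) (auto simp: step_iff)

lemma step_context:
  assumes "(a, b) \<in> step" "u \<in> E0" "walk u L" "walk_source u L = fst a" "walk (src a) M"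
  shows "((u, L @ snd a @ M), (u, L @ snd b @ M)) \<in> step"
proof -
  from assms(1) obtain v xs ys f where "f \<in> F1"
    and a: "a = (v, xs @ [Inr (rF f), Inl (p1 f)] @ ys)"
    and b: "b = (v, xs @ [Inl (q1 f), Inr (sF f)] @ ys)" and "a \<in> paths"
    unfolding step_iff by blast
  moreover have "(u, L @ snd a @ M) \<in> paths"
    using assms \<open>a \<in> paths\<close> by (auto simp: paths_iff_walk mem_paths_iff walk_append)
  ultimately show ?thesis
    using square_step[of f u "L @ xs" "ys @ M"] by simp
qed

lemma sim_context:
  assumes "(a, b) \<in> sim" "u \<in> E0" "walk u L" "walk_source u L = fst a" "walk (src a) M"
  shows "((u, L @ snd a @ M), (u, L @ snd b @ M)) \<in> sim"
  using assms(1)[unfolded sim_eq]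
proof (induction rule: rtrancl_induct)
  case base then show ?case by (rule sim_refl)
next
  case (step y z)
  have "fst y = fst a" "src y = src a"
    using sim_invariants[of a y] step.hyps(1) by (simp_all add: sim_eq)
  moreover have "fst z = fst y" "src z = src y"
    using step.hyps(2) step_invariants(1,2) by (metis Un_iff converse_iff)+
  ultimately have "((u, L @ snd y @ M), (u, L @ snd z @ M)) \<in> sim"
    using step.hyps(2) step_context[of y z u L M] step_context[of z y u L M] assms(2-5)
    by (auto intro: step_sim sim_sym)
  then show ?case using step.IH sim_trans by blast
qed

definition class_of :: "'v \<times> ('e + 'w) list \<Rightarrow> ('v \<times> ('e + 'w) list) set" where
  "class_of x = sim `` {x}"

abbreviation "Mor \<equiv> LamT_mor E0 E1 rE sE F0 F1 rF sF p0 p1 q0 q1"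
abbreviation "idm \<equiv> LamT_id E0 E1 rE sE F0 F1 rF sF p0 p1 q0 q1"
abbreviation "cmp \<equiv> LamT_comp E0 E1 rE sE F0 F1 rF sF p0 p1 q0 q1"
abbreviation "dm \<equiv> LamT_dom sE p0"

lemma class_of_eq_iff: "class_of x = class_of y \<longleftrightarrow> (x, y) \<in> sim"
  unfolding class_of_def using sim_sym sim_trans sim_refl by blast

lemma rep_class_of: "(x, rep (class_of x)) \<in> sim"
  unfolding rep_def class_of_def using someI[of "\<lambda>y. (x, y) \<in> sim" x] sim_refl by simp

lemma class_of_short: "length (snd x) < 2 \<Longrightarrow> class_of x = {x}"
  unfolding class_of_def using sim_short sim_refl by blast

lemma Mor_eq: "Mor = class_of ` paths"
  unfolding LamT_mor_def quotient_def class_of_def by auto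

lemma cod_class_of: "LamT_cod (class_of x) = fst x"
  unfolding LamT_cod_def path_range_def using sim_invariants(1)[OF rep_class_of] by simp

lemma dom_class_of: "dm (class_of x) = src x"
  unfolding LamT_dom_def path_source_eq using sim_invariants(2)[OF rep_class_of] by simp

lemma deg_class_of: "LamT_deg (class_of x) = path_degree x"
  unfolding LamT_deg_def using sim_invariants(3)[OF rep_class_of] by simp

lemma idm_eq: "idm v = class_of (v, [])"
  unfolding LamT_id_def class_of_def by simp

lemma path_concat_paths:
  "x \<in> paths \<Longrightarrow> y \<in> paths \<Longrightarrow> src x = fst y \<Longrightarrow> path_concat x y \<in> paths"
  by (auto simp: path_concat_def mem_paths_iff walk_append)

lemma fst_path_concat: "fst (path_concat x y) = fst x"
  by (simp add: path_concat_def)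

lemma src_path_concat: "src x = fst y \<Longrightarrow> src (path_concat x y) = src y"
  by (simp add: path_concat_def)

lemma sim_path_concat:
  assumes "(x, x') \<in> sim" "(y, y') \<in> sim" "x \<in> paths" "y \<in> paths" "src x = fst y"
  shows "(path_concat x y, path_concat x' y') \<in> sim"
proof -
  have "((fst x, snd x @ snd y), (fst x, snd x' @ snd y)) \<in> sim"
    using sim_context[OF assms(1), of "fst x" "[]" "snd y"] assms by (simp add: mem_paths_iff)
  moreover have "((fst x, snd x' @ snd y), (fst x, snd x' @ snd y')) \<in> sim"
    using sim_context[OF assms(2), of "fst x" "snd x'" "[]"] assms sim_invariants[OF assms(1)]
    by (simp add: mem_paths_iff)
  ultimately show ?thesis
    using sim_trans sim_invariants(1)[OF assms(1)] by (simp add: path_concat_def)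
qed

lemma cmp_class_of:
  assumes "x \<in> paths" "y \<in> paths" "src x = fst y"
  shows "cmp (class_of x) (class_of y) = class_of (path_concat x y)"
proof -
  have "(path_concat x y, path_concat (rep (class_of x)) (rep (class_of y))) \<in> sim"
    using sim_path_concat[OF rep_class_of rep_class_of assms] .
  then show ?thesis
    unfolding LamT_comp_def class_of_def[symmetric] class_of_eq_iff by (rule sim_sym)
qed

lemma category_LamT: "category E0 Mor LamT_cod dm idm cmp"
  unfolding category_def
proof (intro conjI ballI impI)
  fix f assume "f \<in> Mor"
  then obtain x where "x \<in> paths" "f = class_of x" unfolding Mor_eq by blast
  then show "LamT_cod f \<in> E0" "dm f \<in> E0"
    using walk_source_in_E0 by (auto simp: mem_paths_iff cod_class_of dom_class_of)
  have "(fst x, []) \<in> paths" "(src x, []) \<in> paths"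
    using \<open>x \<in> paths\<close> walk_source_in_E0 by (auto simp: mem_paths_iff)
  then show "cmp (idm (LamT_cod f)) f = f" "cmp f (idm (dm f)) = f"
    using \<open>x \<in> paths\<close> by (simp_all add: \<open>f = class_of x\<close> idm_eq cod_class_of dom_class_of
        cmp_class_of path_concat_def)
next
  fix v assume "v \<in> E0"
  then show "idm v \<in> Mor" "LamT_cod (idm v) = v" "dm (idm v) = v"
    by (auto simp: idm_eq Mor_eq paths_iff_walk cod_class_of dom_class_of)
next
  fix f g assume "f \<in> Mor" "g \<in> Mor" and fg: "dm f = LamT_cod g"
  then obtain x y where "x \<in> paths" "f = class_of x" "y \<in> paths" "g = class_of y"
    unfolding Mor_eq by blast
  moreover from this have "src x = fst y" using fg by (simp add: cod_class_of dom_class_of)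
  moreover from calculation have "path_concat x y \<in> paths" by (simp add: path_concat_paths)
  ultimately show "cmp f g \<in> Mor" "LamT_cod (cmp f g) = LamT_cod f" "dm (cmp f g) = dm g"
    by (auto simp: cmp_class_of Mor_eq path_concat_paths cod_class_of dom_class_of path_concat_def)
next
  fix f g h assume "f \<in> Mor" "g \<in> Mor" "h \<in> Mor" "dm f = LamT_cod g" "dm g = LamT_cod h"
  then obtain x y z where "x \<in> paths" "y \<in> paths" "z \<in> paths"
    and "f = class_of x" "g = class_of y" "h = class_of z" "src x = fst y" "src y = fst z"
    unfolding Mor_eq by (auto simp: cod_class_of dom_class_of)
  moreover from this have "path_concat x y \<in> paths" "path_concat y z \<in> paths"
    by (simp_all add: path_concat_paths)
  ultimately have "cmp (cmp f g) h = class_of (path_concat (path_concat x y) z)"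
    and "cmp f (cmp g h) = class_of (path_concat x (path_concat y z))"
    by (simp_all add: cmp_class_of src_path_concat) (simp add: cmp_class_of fst_path_concat)
  then show "cmp (cmp f g) h = cmp f (cmp g h)"
    by (simp add: path_concat_def)
qed

lemma countable_Mor:
  assumes "countable E0" "countable E1" "countable F0"
  shows "countable Mor"
proof -
  have "paths \<subseteq> E0 \<times> lists edges" by (auto simp: GT_paths_def)
  moreover have "countable (E0 \<times> lists edges)" using assms by (simp add: GT_edges_def)
  ultimately show ?thesis unfolding Mor_eq by (blast intro: countable_subset)
qed

section \<open>Unique factorisation implies LR\<close>

lemma class_of_single_edge_eq: "class_of (u, [a]) = class_of (u', [b]) \<Longrightarrow> u = u' \<and> a = b"
  using class_of_short[of "(u, [a])"] class_of_short[of "(u', [b])"] by simp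

lemma sim_two_edge_path:
  assumes "((u, [a, b]), y) \<in> sim" "(u, [a, b]) \<noteq> y"
  shows "\<exists>f\<in>F1. a = Inr (rF f) \<and> b = Inl (p1 f) \<or> a = Inl (q1 f) \<and> b = Inr (sF f)"
proof -
  have "\<exists>w. ((u, [a, b]), w) \<in> step \<union> step\<inverse>"
    using assms unfolding sim_eq by (blast elim: converse_rtranclE)
  then show ?thesis
    by (auto simp: step_iff two_elem_eq_append_conv)
qed

lemma class_of_two_edge_path:
  assumes "(u, [a, b]) \<in> paths"
  shows "class_of (u, [a]) \<in> Mor" "class_of (edge_s a, [b]) \<in> Mor"
    and "dm (class_of (u, [a])) = LamT_cod (class_of (edge_s a, [b]))"
    and "class_of (u, [a, b]) = cmp (class_of (u, [a])) (class_of (edge_s a, [b]))"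
proof -
  have "(u, [a]) \<in> paths" "(edge_s a, [b]) \<in> paths"
    using assms by (auto simp: paths_Cons paths_Nil)
  then show "class_of (u, [a]) \<in> Mor" "class_of (edge_s a, [b]) \<in> Mor"
    and "dm (class_of (u, [a])) = LamT_cod (class_of (edge_s a, [b]))"
    and "class_of (u, [a, b]) = cmp (class_of (u, [a])) (class_of (edge_s a, [b]))"
    by (simp_all add: Mor_eq cod_class_of dom_class_of cmp_class_of path_concat_def)
qed

(* The swaps of a b correspond to the factorisations of its class in the opposite colour order. *)
lemma two_graph_swap_unique:
  assumes two_graph: "two_graph E0 Mor LamT_cod dm idm cmp LamT_deg"
    and x: "(u, [a, b]) \<in> paths"
  shows "\<exists>!(a', b'). isl a' = isl b \<and> isl b' = isl a \<and> ((u, [a, b]), (u, [a', b'])) \<in> sim"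
proof -
  let ?factorisation = "\<lambda>\<mu> \<nu>. \<mu> \<in> Mor \<and> \<nu> \<in> Mor \<and> dm \<mu> = LamT_cod \<nu> \<and>
    LamT_deg \<mu> = path_degree (u, [b]) \<and> LamT_deg \<nu> = path_degree (u, [a]) \<and>
    class_of (u, [a, b]) = cmp \<mu> \<nu>"
  have two_graph_factorisation: "\<And>l m n. l \<in> Mor \<Longrightarrow> LamT_deg l = m + n \<Longrightarrow> \<exists>!(\<mu>, \<nu>).
      \<mu> \<in> Mor \<and> \<nu> \<in> Mor \<and> dm \<mu> = LamT_cod \<nu> \<and> LamT_deg \<mu> = m \<and> LamT_deg \<nu> = n \<and> l = cmp \<mu> \<nu>"
    using two_graph unfolding two_graph_def by blast
  have "class_of (u, [a, b]) \<in> Mor" using x by (simp add: Mor_eq)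
  moreover have "LamT_deg (class_of (u, [a, b])) = path_degree (u, [b]) + path_degree (u, [a])"
    by (simp add: deg_class_of path_degree_def)
  ultimately have unique: "\<exists>!(\<mu>, \<nu>). ?factorisation \<mu> \<nu>"
    by (rule two_graph_factorisation)
  have factorisation: "?factorisation (class_of (u, [a'])) (class_of (edge_s a', [b']))"
    if "isl a' = isl b" "isl b' = isl a" "((u, [a, b]), (u, [a', b'])) \<in> sim" for a' b'
    using that class_of_eq_iff[THEN iffD2, OF that(3)] sim_invariants(4)[OF that(3)] x
      class_of_two_edge_path[of u a' b']
    by (simp add: deg_class_of path_degree_def)
  obtain \<mu> \<nu> where "?factorisation \<mu> \<nu>" using ex1_implies_ex[OF unique] by blast
  then obtain y z where "y \<in> paths" "z \<in> paths" "src y = fst z"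
    and deg: "path_degree y = path_degree (u, [b])" "path_degree z = path_degree (u, [a])"
    and yz: "((u, [a, b]), path_concat y z) \<in> sim"
    unfolding Mor_eq by (auto simp: cod_class_of dom_class_of deg_class_of cmp_class_of class_of_eq_iff)
  moreover obtain a' b' where "snd y = [a']" "isl a' = isl b" "snd z = [b']" "isl b' = isl a"
    using colours_single_edge[OF deg(1)] colours_single_edge[OF deg(2)] by blast
  moreover have "fst y = u" using sim_invariants(1)[OF yz] by (simp add: fst_path_concat)
  ultimately have swap: "isl a' = isl b \<and> isl b' = isl a \<and> ((u, [a, b]), (u, [a', b'])) \<in> sim"
    by (simp add: path_concat_def)
  show ?thesis
  proof (rule ex1_case_prodI)
    show "isl a' = isl b \<and> isl b' = isl a \<and> ((u, [a, b]), (u, [a', b'])) \<in> sim" by (rule swap)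
  next
    fix a'' b''
    assume "isl a'' = isl b \<and> isl b'' = isl a \<and> ((u, [a, b]), (u, [a'', b''])) \<in> sim"
    then have "class_of (u, [a'']) = class_of (u, [a']) \<and>
        class_of (edge_s a'', [b'']) = class_of (edge_s a', [b'])"
      using ex1_case_prodD[OF unique] factorisation swap by blast
    then show "a'' = a' \<and> b'' = b'" using class_of_single_edge_eq by blast
  qed
qed

lemma textile_LR_if_two_graph:
  assumes two_graph: "two_graph E0 Mor LamT_cod dm idm cmp LamT_deg"
  shows "textile_LR E0 E1 rE sE F0 F1 rF sF p0 p1 q0 q1"
  unfolding textile_LR_def
proof (intro conjI ballI impI)
  fix v e assume "v \<in> F0" "e \<in> E1" "p0 v = rE e"
  then have x: "(q0 v, [Inr v, Inl e]) \<in> paths"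
    by (auto simp: paths_iff_walk GT_edges_def q0_in_E0)
  note unique = two_graph_swap_unique[OF two_graph x]
  then obtain a' b' where "isl a'" "((q0 v, [Inr v, Inl e]), (q0 v, [a', b'])) \<in> sim"
    by (auto dest: ex1_implies_ex)
  then obtain f where f: "f \<in> F1" "rF f = v" "p1 f = e"
    using sim_two_edge_path by fastforce
  have swap: "((q0 v, [Inr v, Inl e]), (q0 v, [Inl (q1 g), Inr (sF g)])) \<in> sim"
    if "g \<in> F1" "rF g = v" "p1 g = e" for g
    using square_step[of g "q0 v" "[]" "[]"] x that by (simp add: step_sim)
  have "g = f" if g: "g \<in> F1" "rF g = v" "p1 g = e" for g
    using ex1_case_prodD[OF unique, of "Inl (q1 g)" "Inr (sF g)" "Inl (q1 f)" "Inr (sF f)"]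
      swap[OF g] swap[OF f] f g inj_onD[OF square_inj] by auto
  with f show "\<exists>!f. f \<in> F1 \<and> rF f = v \<and> p1 f = e" by blast
next
  fix v e assume "v \<in> F0" "e \<in> E1" "q0 v = sE e"
  then have x: "(rE e, [Inl e, Inr v]) \<in> paths"
    by (auto simp: paths_iff_walk GT_edges_def rE_in_E0)
  note unique = two_graph_swap_unique[OF two_graph x]
  then obtain a' b' where "\<not> isl a'" "((rE e, [Inl e, Inr v]), (rE e, [a', b'])) \<in> sim"
    by (auto dest: ex1_implies_ex)
  then obtain f where f: "f \<in> F1" "sF f = v" "q1 f = e"
    using sim_two_edge_path by fastforce
  have swap: "((rE e, [Inl e, Inr v]), (rE e, [Inr (rF g), Inl (p1 g)])) \<in> sim"
    if "g \<in> F1" "sF g = v" "q1 g = e" for g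
    using square_step[of g "rE e" "[]" "[]"] x that paths_swap_iff[of g "rE e" "[]" "[]"]
    by (simp add: step_sim sim_sym)
  have "g = f" if g: "g \<in> F1" "sF g = v" "q1 g = e" for g
    using ex1_case_prodD[OF unique, of "Inr (rF g)" "Inl (p1 g)" "Inr (rF f)" "Inl (p1 f)"]
      swap[OF g] swap[OF f] f g inj_onD[OF square_inj] by auto
  with f show "\<exists>!f. f \<in> F1 \<and> sF f = v \<and> q1 f = e" by blast
qed

end

section \<open>LR implies unique factorisation\<close>

locale LR_textile = textile E0 E1 rE sE F0 F1 rF sF p0 p1 q0 q1
  for E0 :: "'v set" and E1 :: "'e set" and rE sE :: "'e \<Rightarrow> 'v"
    and F0 :: "'w set" and F1 :: "'f set" and rF sF :: "'f \<Rightarrow> 'w"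
    and p0 :: "'w \<Rightarrow> 'v" and p1 :: "'f \<Rightarrow> 'e" and q0 :: "'w \<Rightarrow> 'v" and q1 :: "'f \<Rightarrow> 'e" +
  assumes LR: "textile_LR E0 E1 rE sE F0 F1 rF sF p0 p1 q0 q1"
begin

lemma unique_r_lift: "v \<in> F0 \<Longrightarrow> e \<in> E1 \<Longrightarrow> p0 v = rE e \<Longrightarrow> \<exists>!f. f \<in> F1 \<and> rF f = v \<and> p1 f = e"
  and unique_s_lift: "v \<in> F0 \<Longrightarrow> e \<in> E1 \<Longrightarrow> q0 v = sE e \<Longrightarrow> \<exists>!f. f \<in> F1 \<and> sF f = v \<and> q1 f = e"
  using LR unfolding textile_LR_def by auto

definition swap_square :: "'w \<Rightarrow> 'e \<Rightarrow> 'e \<times> 'w" where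
  "swap_square v e = (let f = THE f. f \<in> F1 \<and> rF f = v \<and> p1 f = e in (q1 f, sF f))"

lemma swap_square_eq: "f \<in> F1 \<Longrightarrow> swap_square (rF f) (p1 f) = (q1 f, sF f)"
proof -
  assume f: "f \<in> F1"
  have "(THE g. g \<in> F1 \<and> rF g = rF f \<and> p1 g = p1 f) = f"
    using unique_r_lift[of "rF f" "p1 f"] f rF_in_F0 p1_in_E1 rE_p1
    by (intro the1_equality) auto
  then show ?thesis by (simp add: swap_square_def)
qed

lemma obtain_square:
  assumes "v \<in> F0" "e \<in> E1" "p0 v = rE e"
  obtains f where "f \<in> F1" "rF f = v" "p1 f = e" "swap_square v e = (q1 f, sF f)"
  using unique_r_lift[OF assms] swap_square_eq by blast

fun push_through :: "'w \<Rightarrow> 'e list \<Rightarrow> 'e list \<times> 'w" where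
  "push_through w [] = ([], w)"
| "push_through w (e # es) =
    (fst (swap_square w e) # fst (push_through (snd (swap_square w e)) es),
     snd (push_through (snd (swap_square w e)) es))"

(* The colour-1 and colour-2 edges of the path obtained by pushing every colour-2 edge to the
   source end; unique r-path lifting of p makes each push through a colour-1 edge determined. *)
fun normal_form :: "('e + 'w) list \<Rightarrow> 'e list \<times> 'w list" where
  "normal_form [] = ([], [])"
| "normal_form (Inl e # L) = (e # fst (normal_form L), snd (normal_form L))"
| "normal_form (Inr w # L) =
    (fst (push_through w (fst (normal_form L))),
     snd (push_through w (fst (normal_form L))) # snd (normal_form L))"

lemma normal_form_swap:
  "swap_square v e = (e', w) \<Longrightarrow> normal_form (xs @ Inr v # Inl e # ys) = normal_form (xs @ Inl e' # Inr w # ys)"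
proof (induction xs)
  case (Cons x xs) then show ?case by (cases x) simp_all
qed simp

lemma normal_form_step: "(a, b) \<in> step \<Longrightarrow> normal_form (snd a) = normal_form (snd b)"
  unfolding step_iff using normal_form_swap swap_square_eq by fastforce

lemma normal_form_sim: "(a, b) \<in> sim \<Longrightarrow> normal_form (snd a) = normal_form (snd b)"
  unfolding sim_eq by (rule rtrancl_sym_invariant[OF normal_form_step])

lemma walk_push_through:
  "walk u (Inr w # map Inl es @ M) \<Longrightarrow>
   walk u (map Inl (fst (push_through w es)) @ Inr (snd (push_through w es)) # M)"
proof (induction es arbitrary: u w)
  case (Cons e es)
  then have w: "w \<in> F0" "q0 w = u" "e \<in> E1" "rE e = p0 w" "walk (sE e) (map Inl es @ M)"
    by (auto simp: GT_edges_def)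
  obtain f where f: "f \<in> F1" "rF f = w" "p1 f = e" "swap_square w e = (q1 f, sF f)"
    using obtain_square[of w e] w by metis
  have "walk (q0 (sF f)) (Inr (sF f) # map Inl es @ M)"
    using f w sF_in_F0 sE_p1 by (auto simp: GT_edges_def)
  then have "walk (q0 (sF f)) (map Inl (fst (push_through (sF f) es)) @ Inr (snd (push_through (sF f) es)) # M)"
    using Cons.IH by blast
  then show ?case using f w q1_in_E1 rE_q1 sE_q1 by (auto simp: GT_edges_def)
qed simp

lemma walk_normal_form: "walk u L \<Longrightarrow> walk u (map Inl (fst (normal_form L)) @ map Inr (snd (normal_form L)))"
proof (induction L arbitrary: u rule: normal_form.induct)
  case (3 w L)
  then have "walk u (Inr w # map Inl (fst (normal_form L)) @ map Inr (snd (normal_form L)))"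
    by (auto simp: GT_edges_def)
  from walk_push_through[OF this] show ?case by simp
qed (auto simp: GT_edges_def)

lemma length_push_through: "length (fst (push_through w es)) = length es"
  by (induction es arbitrary: w) auto

lemma length_normal_form: "length (fst (normal_form L)) = length (filter id (map isl L))"
  by (induction L rule: normal_form.induct) (auto simp: length_push_through)

lemma push_through_inj:
  "walk u (Inr w # map Inl es) \<Longrightarrow> walk u' (Inr w' # map Inl es') \<Longrightarrow> length es = length es' \<Longrightarrow>
   push_through w es = push_through w' es' \<Longrightarrow> w = w' \<and> es = es'"
proof (induction es arbitrary: u u' w w' es')
  case (Cons e es)
  then obtain e' es'' where es': "es' = e' # es''" by (cases es') auto
  from Cons.prems have w: "w \<in> F0" "e \<in> E1" "rE e = p0 w" "walk (sE e) (map Inl es)"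
    by (auto simp: GT_edges_def)
  from Cons.prems have w': "w' \<in> F0" "e' \<in> E1" "rE e' = p0 w'" "walk (sE e') (map Inl es'')"
    by (auto simp: GT_edges_def es')
  obtain f where f: "f \<in> F1" "rF f = w" "p1 f = e" "swap_square w e = (q1 f, sF f)"
    using obtain_square[of w e] w by metis
  obtain f' where f': "f' \<in> F1" "rF f' = w'" "p1 f' = e'" "swap_square w' e' = (q1 f', sF f')"
    using obtain_square[of w' e'] w' by metis
  have eq: "q1 f = q1 f'" "push_through (sF f) es = push_through (sF f') es''"
    using Cons.prems(4) f f' es' by (auto simp: prod_eq_iff)
  have "walk (q0 (sF f)) (Inr (sF f) # map Inl es)" "walk (q0 (sF f')) (Inr (sF f') # map Inl es'')"
    using f w f' w' sF_in_F0 sE_p1 by (auto simp: GT_edges_def)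
  then have "sF f = sF f'" "es = es''"
    using Cons.IH[OF _ _ _ eq(2)] Cons.prems(3) es' by auto
  then have "f = f'"
    using unique_s_lift[of "sF f" "q1 f"] f f' eq sF_in_F0 q1_in_E1 sE_q1 by metis
  then show ?case using f f' es' \<open>es = es''\<close> by simp
qed simp

lemma normal_form_inj:
  "walk u L \<Longrightarrow> walk u' L' \<Longrightarrow> map isl L = map isl L' \<Longrightarrow> normal_form L = normal_form L' \<Longrightarrow> L = L'"
proof (induction L arbitrary: u u' L')
  case (Cons x L)
  then obtain y L'' where L': "L' = y # L''" and xy: "isl x = isl y" and colours: "map isl L = map isl L''"
    by (cases L') auto
  show ?case
  proof (cases x)
    case (Inl e)
    then obtain e' where "y = Inl e'" using xy by (cases y) auto
    then show ?thesis using Cons.prems Cons.IH[of "sE e" "sE e'" L''] Inl L' colours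
      by (auto simp: prod_eq_iff)
  next
    case (Inr w)
    then obtain w' where y: "y = Inr w'" using xy by (cases y) auto
    from Cons.prems Inr have w: "w \<in> F0" "walk (p0 w) L" by (auto simp: GT_edges_def)
    from Cons.prems y L' have w': "w' \<in> F0" "walk (p0 w') L''" by (auto simp: GT_edges_def)
    have "walk (q0 w) (Inr w # map Inl (fst (normal_form L)))"
      "walk (q0 w') (Inr w' # map Inl (fst (normal_form L'')))"
      using walk_normal_form[OF w(2)] walk_normal_form[OF w'(2)] w w'
      by (auto simp: walk_append GT_edges_def)
    moreover have "length (fst (normal_form L)) = length (fst (normal_form L''))"
      using colours by (simp add: length_normal_form)
    moreover have "push_through w (fst (normal_form L)) = push_through w' (fst (normal_form L''))"
      using Cons.prems(4) Inr y L' by (simp add: prod_eq_iff)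
    moreover have snd_eq: "snd (normal_form L) = snd (normal_form L'')"
      using Cons.prems(4) Inr y L' by (simp add: prod_eq_iff)
    ultimately have "w = w' \<and> fst (normal_form L) = fst (normal_form L'')"
      using push_through_inj by blast
    with snd_eq have "w = w'" "normal_form L = normal_form L''"
      by (simp_all add: prod_eq_iff)
    then show ?thesis using Cons.IH[OF w(2) w'(2) colours] Inr y L' by simp
  qed
qed simp

lemma sim_eq_if_colours_eq:
  "x \<in> paths \<Longrightarrow> (x, y) \<in> sim \<Longrightarrow> map isl (snd x) = map isl (snd y) \<Longrightarrow> x = y"
  using normal_form_inj[of "fst x" "snd x" "fst y" "snd y"] normal_form_sim[of x y]
    sim_invariants(1,4)[of x y] by (simp add: mem_paths_iff prod_eq_iff)

lemma swap_adjacent: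
  assumes path: "(u, Y @ [y, z] @ Z) \<in> paths" and "isl y \<noteq> isl z"
  obtains y' z' where "isl y' = isl z" "isl z' = isl y"
    and "((u, Y @ [y, z] @ Z), (u, Y @ [y', z'] @ Z)) \<in> sim"
proof -
  have walk: "walk (walk_source u Y) [y, z]"
    using path by (simp add: paths_iff_walk walk_append)
  show thesis
  proof (cases y)
    case (Inl e)
    then obtain v where z: "z = Inr v" using \<open>isl y \<noteq> isl z\<close> by (cases z) auto
    with Inl walk have "v \<in> F0" "e \<in> E1" "q0 v = sE e" by (auto simp: GT_edges_def)
    then obtain f where f: "f \<in> F1" "sF f = v" "q1 f = e" using unique_s_lift by blast
    then have "(u, Y @ [Inr (rF f), Inl (p1 f)] @ Z) \<in> paths"
      using path paths_swap_iff[OF f(1), of u Y Z] Inl z by simp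
    then have "((u, Y @ [Inr (rF f), Inl (p1 f)] @ Z), (u, Y @ [y, z] @ Z)) \<in> step"
      using square_step[OF f(1)] Inl z f by simp
    then show thesis using that[of "Inr (rF f)" "Inl (p1 f)"] Inl z step_sim sim_sym by simp
  next
    case (Inr v)
    then obtain e where z: "z = Inl e" using \<open>isl y \<noteq> isl z\<close> by (cases z) auto
    with Inr walk have "v \<in> F0" "e \<in> E1" "p0 v = rE e" by (auto simp: GT_edges_def)
    then obtain f where f: "f \<in> F1" "rF f = v" "p1 f = e" using unique_r_lift by blast
    then have "((u, Y @ [y, z] @ Z), (u, Y @ [Inl (q1 f), Inr (sF f)] @ Z)) \<in> step"
      using square_step[OF f(1)] path Inr z by simp
    then show thesis using that[of "Inl (q1 f)" "Inr (sF f)"] Inr z step_sim by simp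
  qed
qed

lemma move_to_front:
  "(u, Y @ z # Z) \<in> paths \<Longrightarrow> \<forall>y\<in>set Y. isl y \<noteq> isl z \<Longrightarrow>
   \<exists>z' Y'. isl z' = isl z \<and> map isl Y' = map isl Y \<and> ((u, Y @ z # Z), (u, z' # Y' @ Z)) \<in> sim"
proof (induction Y arbitrary: z Z rule: rev_induct)
  case Nil then show ?case using sim_refl by (intro exI[of _ z] exI[of _ "[]"]) simp
next
  case (snoc y Y)
  have path: "(u, Y @ [y, z] @ Z) \<in> paths" and "isl y \<noteq> isl z"
    using snoc.prems by simp_all
  then obtain y' z' where y'z': "isl y' = isl z" "isl z' = isl y"
    and swap: "((u, Y @ [y, z] @ Z), (u, Y @ [y', z'] @ Z)) \<in> sim"
    by (rule swap_adjacent)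
  have "(u, Y @ y' # z' # Z) \<in> paths" using sim_invariants(4)[OF swap] path by simp
  moreover have "\<forall>x\<in>set Y. isl x \<noteq> isl y'" using snoc.prems(2) y'z'(1) by simp
  ultimately obtain z'' Y' where "isl z'' = isl y'" "map isl Y' = map isl Y"
    and "((u, Y @ y' # z' # Z), (u, z'' # Y' @ z' # Z)) \<in> sim"
    using snoc.IH by blast
  with swap y'z' show ?case
    by (intro exI[of _ z''] exI[of _ "Y' @ [z']"]) (auto intro: sim_trans)
qed

lemma rearrange_colours:
  "(u, L) \<in> paths \<Longrightarrow> mset c = mset (map isl L) \<Longrightarrow> \<exists>L'. ((u, L), (u, L')) \<in> sim \<and> map isl L' = c"
proof (induction c arbitrary: u L)
  case Nil
  then have "L = []" by simp
  then show ?case using sim_refl by simp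
next
  case (Cons b c)
  then have "b \<in> set (map isl L)" using mset_eq_setD[OF Cons.prems(2)] by (metis list.set_intros(1))
  then have "\<exists>z\<in>set L. isl z = b" by auto
  then obtain Y z Z where L: "L = Y @ z # Z" "isl z = b" "\<forall>y\<in>set Y. isl y \<noteq> b"
    by (rule split_list_first_propE)
  then obtain z' Y' where z': "isl z' = b" "map isl Y' = map isl Y"
    and front: "((u, L), (u, z' # Y' @ Z)) \<in> sim"
    using move_to_front[of u Y z Z] Cons.prems(1) by auto
  have "(u, z' # Y' @ Z) \<in> paths" using sim_invariants(4)[OF front] Cons.prems(1) by simp
  then have u: "u \<in> E0" "walk u [z']" and tail: "(edge_s z', Y' @ Z) \<in> paths"
    by (simp_all add: paths_Cons paths_Nil paths_iff_walk edge_s_in_E0)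
  have "mset c = mset (map isl (Y' @ Z))" using Cons.prems(2) L z' by simp
  then obtain L' where "((edge_s z', Y' @ Z), (edge_s z', L')) \<in> sim" "map isl L' = c"
    using Cons.IH[OF tail] by blast
  moreover from this have "((u, [z'] @ (Y' @ Z) @ []), (u, [z'] @ L' @ [])) \<in> sim"
    using sim_context[of "(edge_s z', Y' @ Z)" "(edge_s z', L')" u "[z']" "[]"] u by simp
  ultimately show ?case
    using sim_trans[OF front] z'(1) by (intro exI[of _ "z' # L'"]) simp
qed

lemma mor_rep_with_colours:
  assumes "C \<in> Mor" "mset c = mset (colour_pattern (LamT_deg C))"
  obtains y where "y \<in> paths" "C = class_of y" "map isl (snd y) = c"
proof -
  obtain x where x: "x \<in> paths" "C = class_of x" using assms(1) Mor_eq by blast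
  then have "mset c = mset (map isl (snd x))"
    using assms(2) mset_map_isl[of "snd x" "fst x"] by (simp add: deg_class_of del: mset_map)
  then obtain L' where "(x, (fst x, L')) \<in> sim" "map isl L' = c"
    using rearrange_colours[of "fst x" "snd x" c] x(1) by auto
  then show thesis
    using that[of "(fst x, L')"] x sim_invariants(4) class_of_eq_iff by auto
qed

lemma unique_factorisation:
  assumes "l \<in> Mor" "LamT_deg l = m + n"
  shows "\<exists>!(\<mu>, \<nu>). \<mu> \<in> Mor \<and> \<nu> \<in> Mor \<and> dm \<mu> = LamT_cod \<nu> \<and>
    LamT_deg \<mu> = m \<and> LamT_deg \<nu> = n \<and> l = cmp \<mu> \<nu>"
proof -
  let ?k = "length (colour_pattern m)"
  have "mset (colour_pattern m @ colour_pattern n) = mset (colour_pattern (LamT_deg l))"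
    using assms(2) mset_colour_pattern_add by simp
  then obtain y where y: "y \<in> paths" "l = class_of y"
    and colours_y: "map isl (snd y) = colour_pattern m @ colour_pattern n"
    by (rule mor_rep_with_colours[OF assms(1)])
  define a where "a = (fst y, take ?k (snd y))"
  define b where "b = (src a, drop ?k (snd y))"
  have "fst y \<in> E0" "walk (fst y) (take ?k (snd y) @ drop ?k (snd y))"
    using y(1) by (simp_all add: mem_paths_iff)
  then have ab: "a \<in> paths" "b \<in> paths" "src a = fst b" "path_concat a b = y"
    using walk_source_in_E0 unfolding walk_append
    by (auto simp: a_def b_def mem_paths_iff path_concat_def)
  have colours_ab: "map isl (snd a) = colour_pattern m" "map isl (snd b) = colour_pattern n"
    using colours_y by (simp_all add: a_def b_def take_map[symmetric] drop_map[symmetric])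
  show ?thesis
  proof (rule ex1_case_prodI)
    show "class_of a \<in> Mor \<and> class_of b \<in> Mor \<and> dm (class_of a) = LamT_cod (class_of b) \<and>
      LamT_deg (class_of a) = m \<and> LamT_deg (class_of b) = n \<and> l = cmp (class_of a) (class_of b)"
      using ab colours_ab y(2)
      by (simp add: Mor_eq dom_class_of cod_class_of deg_class_of cmp_class_of path_degree_eq_if_colours)
  next
    fix \<mu> \<nu>
    assume factorisation: "\<mu> \<in> Mor \<and> \<nu> \<in> Mor \<and> dm \<mu> = LamT_cod \<nu> \<and>
      LamT_deg \<mu> = m \<and> LamT_deg \<nu> = n \<and> l = cmp \<mu> \<nu>"
    obtain a' where a': "a' \<in> paths" "\<mu> = class_of a'" "map isl (snd a') = colour_pattern m"
      using mor_rep_with_colours[of \<mu> "colour_pattern m"] factorisation by blast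
    obtain b' where b': "b' \<in> paths" "\<nu> = class_of b'" "map isl (snd b') = colour_pattern n"
      using mor_rep_with_colours[of \<nu> "colour_pattern n"] factorisation by blast
    have "src a' = fst b'" "class_of y = class_of (path_concat a' b')"
      using factorisation a' b' y(2) by (simp_all add: dom_class_of cod_class_of cmp_class_of)
    moreover have "map isl (snd (path_concat a' b')) = map isl (snd y)"
      using a'(3) b'(3) colours_y by (simp add: path_concat_def)
    ultimately have "y = path_concat a' b'"
      using sim_eq_if_colours_eq[OF y(1), of "path_concat a' b'"] class_of_eq_iff by simp
    moreover have "length (snd a') = ?k" using a'(3) by (metis length_map)
    ultimately have "a' = a" "b' = b"
      using \<open>src a' = fst b'\<close> by (auto simp: a_def b_def path_concat_def prod_eq_iff)
    with a' b' show "\<mu> = class_of a \<and> \<nu> = class_of b" by simp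
  qed
qed

theorem two_graph_LamT:
  assumes "countable E0" "countable E1" "countable F0"
  shows "two_graph E0 Mor LamT_cod dm idm cmp LamT_deg"
  unfolding two_graph_def
proof (intro conjI ballI allI impI)
  show "category E0 Mor LamT_cod dm idm cmp" by (rule category_LamT)
  show "countable Mor" using assms by (rule countable_Mor)
next
  fix v assume "v \<in> E0"
  show "LamT_deg (idm v) = 0" by (simp add: idm_eq deg_class_of path_degree_def zero_prod_def)
next
  fix f g assume "f \<in> Mor" "g \<in> Mor" "dm f = LamT_cod g"
  then obtain x y where "x \<in> paths" "y \<in> paths" "f = class_of x" "g = class_of y" "src x = fst y"
    unfolding Mor_eq by (auto simp: dom_class_of cod_class_of)
  then show "LamT_deg (cmp f g) = LamT_deg f + LamT_deg g"
    by (simp add: cmp_class_of deg_class_of path_degree_concat)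
next
  fix l m n assume "l \<in> Mor" "LamT_deg l = m + n"
  then show "\<exists>!(\<mu>, \<nu>). \<mu> \<in> Mor \<and> \<nu> \<in> Mor \<and> dm \<mu> = LamT_cod \<nu> \<and>
      LamT_deg \<mu> = m \<and> LamT_deg \<nu> = n \<and> l = cmp \<mu> \<nu>"
    by (rule unique_factorisation)
qed

end

theorem (in textile) two_graph_iff_LR:
  assumes "countable E0" "countable E1" "countable F0"
  shows "two_graph E0 Mor LamT_cod dm idm cmp LamT_deg \<longleftrightarrow>
    textile_LR E0 E1 rE sE F0 F1 rF sF p0 p1 q0 q1"
proof
  assume "textile_LR E0 E1 rE sE F0 F1 rF sF p0 p1 q0 q1"
  then interpret LR_textile E0 E1 rE sE F0 F1 rF sF p0 p1 q0 q1 by unfold_locales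
  show "two_graph E0 Mor LamT_cod dm idm cmp LamT_deg" using assms by (rule two_graph_LamT)
qed (rule textile_LR_if_two_graph)

theorem theorem4p5:
  fixes E0 :: "'v set" and E1 :: "'e set" and rE sE :: "'e \<Rightarrow> 'v"
    and F0 :: "'w set" and F1 :: "'f set" and rF sF :: "'f \<Rightarrow> 'w"
    and p0 q0 :: "'w \<Rightarrow> 'v" and p1 q1 :: "'f \<Rightarrow> 'e"
  assumes T: "textile_system E0 E1 rE sE F0 F1 rF sF p0 p1 q0 q1"
    and cE0: "countable E0" and cE1: "countable E1"
    and cF0: "countable F0" and cF1: "countable F1"
    and p_surj: "hom_surjective F0 F1 E0 E1 p0 p1"
    and q_surj: "hom_surjective F0 F1 E0 E1 q0 q1"
  shows "two_graph E0 (LamT_mor E0 E1 rE sE F0 F1 rF sF p0 p1 q0 q1)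
            LamT_cod (LamT_dom sE p0)
            (LamT_id E0 E1 rE sE F0 F1 rF sF p0 p1 q0 q1)
            (LamT_comp E0 E1 rE sE F0 F1 rF sF p0 p1 q0 q1) LamT_deg
         \<longleftrightarrow> textile_LR E0 E1 rE sE F0 F1 rF sF p0 p1 q0 q1"
  using textile.two_graph_iff_LR[OF textile.intro[OF T] cE0 cE1 cF0] .

end
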